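(* There is a constant $C$ such that for every sufficiently large $n$ there exists a $3$-planar graph of girth $5$ on $n$ vertices with at least $2.5n-C$ edges.
   Context: All graphs are finite and simple. A graph is $k$-planar if it admits a drawing in the plane in which every edge is crossed at most $k$ times. The girth of a graph is the length of its shortest cycle. (The paper states the edge count as $2.5n-O(1)$.) *)

theory Defs
  imports "HOL-Analysis.Analysis"
begin

definition simple_graph :: "'a set \<Rightarrow> 'a set set \<Rightarrow> bool" where
  "simple_graph V E \<longleftrightarrow> finite V \<and> (\<forall>e\<in>E. e \<subseteq> V \<and> card e = 2)"

definition has_cycle_of_length :: "'a set \<Rightarrow> 'a set set \<Rightarrow> nat \<Rightarrow> bool" where
  "has_cycle_of_length V E L \<longleftrightarrow> L \<ge> 3 \<and>
     (\<exists>c :: nat \<Rightarrow> 'a. inj_on c {..<L} \<and> c ` {..<L} \<subseteq> V \<and>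
        (\<forall>i<L. {c i, c ((i + 1) mod L)} \<in> E))"

definition girth :: "'a set \<Rightarrow> 'a set set \<Rightarrow> nat" where
  "girth V E = (LEAST L. has_cycle_of_length V E L)"

definition curve_interior :: "(real \<Rightarrow> real^2) \<Rightarrow> (real^2) set" where
  "curve_interior g = g ` {0<..<1}"

definition k_planar_drawing ::
  "nat \<Rightarrow> 'a set \<Rightarrow> 'a set set \<Rightarrow> ('a \<Rightarrow> real^2) \<Rightarrow> ('a set \<Rightarrow> real \<Rightarrow> real^2) \<Rightarrow> bool" where
  "k_planar_drawing k V E pos \<gamma> \<longleftrightarrow>
     inj_on pos V \<and>
     (\<forall>e\<in>E. arc (\<gamma> e) \<and>
        (\<exists>u v. e = {u, v} \<and> pathstart (\<gamma> e) = pos u \<and> pathfinish (\<gamma> e) = pos v) \<and>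
        curve_interior (\<gamma> e) \<inter> pos ` V = {}) \<and>
     (\<forall>e\<in>E. finite {(f, p). f \<in> E \<and> f \<noteq> e \<and> p \<in> curve_interior (\<gamma> e) \<inter> curve_interior (\<gamma> f)} \<and>
        card {(f, p). f \<in> E \<and> f \<noteq> e \<and> p \<in> curve_interior (\<gamma> e) \<inter> curve_interior (\<gamma> f)} \<le> k)"

definition k_planar :: "nat \<Rightarrow> 'a set \<Rightarrow> 'a set set \<Rightarrow> bool" where
  "k_planar k V E \<longleftrightarrow> (\<exists>pos \<gamma>. k_planar_drawing k V E pos \<gamma>)"

end

theory Submission
  imports Defs
begin

text \<open>The graph has R layers of 16 vertices.  Layer y is a 16-cycle drawn on the boundary of
  the square of sup-norm radius 4 * 3^y, and 24 straight spokes join each layer to the next, so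
  the 16 R vertices carry 16 R + 24 (R - 1) = 2.5 * 16 R - 24 edges.  The spokes between layers
  y and y + 1 lie strictly between the squares of sup-norm 4 * 3^y and 4 * 3^(y+1), so only
  spokes of the same gap can cross; as all gaps are similar, a finite check of one gap shows
  that every spoke crosses at most three others, each once.  The graph is the lift of a voltage
  graph on 16 vertices (ring edges of voltage 0, spokes of voltage 1): a triangle or
  quadrilateral would project to a closed template walk of total voltage 0, which an exhaustive
  search rules out, and an explicit pentagon shows that the girth is exactly 5.\<close>

section \<open>Segments and crossings in the plane\<close>

lemma curve_interior_linepath:
  "a \<noteq> b \<Longrightarrow> curve_interior (linepath a b) = open_segment a b"
  by (simp add: curve_interior_def open_segment_image_interval linepath_def)

lemma open_segment_scaleR:
  fixes a b :: "'a::real_vector"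
  assumes "c \<noteq> 0"
  shows "open_segment (c *\<^sub>R a) (c *\<^sub>R b) = (\<lambda>p. c *\<^sub>R p) ` open_segment a b"
  using assms bounded_linear.linear[OF bounded_linear_scaleR_right]
  by (intro open_segment_linear_image) (auto simp: inj_on_def)

lemma in_open_segment_2:
  fixes a b p :: "real^2"
  shows "p \<in> open_segment a b \<longleftrightarrow> a \<noteq> b \<and>
    (\<exists>t. 0 < t \<and> t < 1 \<and> p$1 = (1 - t) * a$1 + t * b$1 \<and> p$2 = (1 - t) * a$2 + t * b$2)"
  by (auto simp: in_segment vec_eq_iff forall_2)

lemma open_segments_meet_at_most_once:
  fixes a b c d p p' :: "real^2"
  assumes "(b$1 - a$1) * (d$2 - c$2) - (b$2 - a$2) * (d$1 - c$1) \<noteq> 0"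
    and "p \<in> open_segment a b" "p \<in> open_segment c d"
    and "p' \<in> open_segment a b" "p' \<in> open_segment c d"
  shows "p = p'"
proof -
  obtain s t s' t' where
    s: "p$1 = (1-s)*a$1 + s*b$1" "p$2 = (1-s)*a$2 + s*b$2" and
    t: "p$1 = (1-t)*c$1 + t*d$1" "p$2 = (1-t)*c$2 + t*d$2" and
    s': "p'$1 = (1-s')*a$1 + s'*b$1" "p'$2 = (1-s')*a$2 + s'*b$2" and
    t': "p'$1 = (1-t')*c$1 + t'*d$1" "p'$2 = (1-t')*c$2 + t'*d$2"
    using assms(2-5) unfolding in_open_segment_2 by blast
  have e1: "(s-s')*(b$1-a$1) = (t-t')*(d$1-c$1)" and e2: "(s-s')*(b$2-a$2) = (t-t')*(d$2-c$2)"
    using s t s' t' by (simp_all add: algebra_simps)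
  have "(s-s') * ((b$1 - a$1)*(d$2 - c$2) - (b$2 - a$2)*(d$1 - c$1))
      = ((s-s')*(b$1-a$1))*(d$2-c$2) - ((s-s')*(b$2-a$2))*(d$1-c$1)"
    by (simp add: algebra_simps)
  also have "\<dots> = 0" unfolding e1 e2 by (simp add: algebra_simps)
  finally have "s = s'" using assms(1) by simp
  then show ?thesis using s s' by (simp add: vec_eq_iff forall_2)
qed

lemma power_band_unique:
  fixes r c t :: real
  assumes "1 < r" "c * r^a \<le> t" "t < c * r^Suc a" "c * r^b \<le> t" "t < c * r^Suc b"
  shows "a = b"
proof -
  have "0 < c * r^a * (r - 1)" using assms(2,3) by (simp add: algebra_simps)
  then have "0 < c" using assms(1) by (simp add: zero_less_mult_iff)
  have False if "i < j" "t < c * r^Suc i" "c * r^j \<le> t" for i j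
  proof -
    have "r^Suc i \<le> r^j" using that(1) assms(1) by (intro power_increasing) auto
    then show False using that(2,3) \<open>0 < c\<close> by (smt (verit) mult_left_mono)
  qed
  then show ?thesis using assms(3,5) assms(2,4) by (metis linorder_neqE_nat)
qed

definition crossings ::
    "'a set set \<Rightarrow> ('a set \<Rightarrow> real \<Rightarrow> real^2) \<Rightarrow> 'a set \<Rightarrow> ('a set \<times> (real^2)) set" where
  "crossings E \<gamma> e =
     {(f, p). f \<in> E \<and> f \<noteq> e \<and> p \<in> curve_interior (\<gamma> e) \<inter> curve_interior (\<gamma> f)}"

lemma card_le_if_functional:
  assumes "finite F" "\<And>f p. (f, p) \<in> X \<Longrightarrow> f \<in> F"
    and "\<And>f p p'. (f, p) \<in> X \<Longrightarrow> (f, p') \<in> X \<Longrightarrow> p = p'"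
  shows "finite X \<and> card X \<le> card F"
proof -
  have inj: "inj_on fst X" using assms(3) by (force simp: inj_on_def)
  have sub: "fst ` X \<subseteq> F" using assms(2) by force
  then have "finite X" using inj assms(1) finite_imageD finite_subset by blast
  moreover have "card X \<le> card F"
    using card_image[OF inj] card_mono[OF assms(1) sub] by simp
  ultimately show ?thesis ..
qed


section \<open>Short cycles in lifts of voltage graphs\<close>

lemma girth_eqI:
  assumes "has_cycle_of_length V E L" "\<And>k. k < L \<Longrightarrow> \<not> has_cycle_of_length V E k"
  shows "girth V E = L"
  unfolding girth_def using assms by (metis Least_equality not_less)

lemma has_cycle_of_length_if_list:
  assumes "distinct cs" "length cs = L" "3 \<le> L" "set cs \<subseteq> V"
    and "\<And>i. i < L \<Longrightarrow> {cs ! i, cs ! ((i + 1) mod L)} \<in> E"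
  shows "has_cycle_of_length V E L"
  unfolding has_cycle_of_length_def
proof (intro conjI exI[of _ "(!) cs"])
  show "inj_on ((!) cs) {..<L}" using assms(1,2) by (simp add: inj_on_nth)
  show "(!) cs ` {..<L} \<subseteq> V" using assms(2,4) by (auto simp: set_conv_nth)
qed (use assms in auto)

text \<open>A voltage graph on the template vertices {0..<m} is given by nb, where nb x lists the
  pairs (voltage, neighbour) of x.  Vertex v of the lift lies in layer v div m over v mod m, and
  the hypothesis lift below says that every edge joins layers differing by the voltage of a
  template edge.  The conditions on nb quantify over set [0..<m] so that code_simp can decide
  them.\<close>

definition no_balanced_triangle :: "nat \<Rightarrow> (nat \<Rightarrow> (int \<times> nat) list) \<Rightarrow> bool" where
  "no_balanced_triangle m nb \<longleftrightarrow>
    (\<forall>x\<in>set [0..<m]. \<forall>(a, x1)\<in>set (nb x). \<forall>(b, x2)\<in>set (nb x1). (a + b, x2) \<notin> set (nb x))"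

text \<open>The two side conditions exclude walks whose lift revisits a vertex.\<close>

definition no_balanced_quadrilateral :: "nat \<Rightarrow> (nat \<Rightarrow> (int \<times> nat) list) \<Rightarrow> bool" where
  "no_balanced_quadrilateral m nb \<longleftrightarrow>
    (\<forall>x\<in>set [0..<m]. \<forall>(a, x1)\<in>set (nb x). \<forall>(b, x2)\<in>set (nb x1). \<forall>(c, x3)\<in>set (nb x2).
      (a + b, x2) \<noteq> (0, x) \<longrightarrow> (a + b + c, x3) \<noteq> (a, x1) \<longrightarrow> (a + b + c, x3) \<notin> set (nb x))"

lemma lift_no_3_cycle:
  assumes "0 < m" "no_balanced_triangle m nb"
    and lift: "\<And>u v. {u, v} \<in> E \<Longrightarrow> (int (v div m) - int (u div m), v mod m) \<in> set (nb (u mod m))"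
  shows "\<not> has_cycle_of_length V E 3"
proof
  assume "has_cycle_of_length V E 3"
  then obtain c where edge: "\<forall>i<(3::nat). {c i, c ((i + 1) mod 3)} \<in> E"
    unfolding has_cycle_of_length_def by blast
  have succ: "(0 + 1) mod 3 = (1::nat)" "(1 + 1) mod 3 = (2::nat)" "(2 + 1) mod 3 = (0::nat)"
    by simp_all
  have "{c 0, c 1} \<in> E" "{c 1, c 2} \<in> E" "{c 2, c 0} \<in> E"
    using edge[rule_format, of 0] edge[rule_format, of 1] edge[rule_format, of 2]
    unfolding succ by simp_all
  then have "{c 0, c 2} \<in> E" by (simp add: insert_commute)
  define r where "r i = int (c i div m)" for i
  define k where "k i = c i mod m" for i
  have "(r 1 - r 0, k 1) \<in> set (nb (k 0))" "(r 2 - r 1, k 2) \<in> set (nb (k 1))"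
    and "(r 1 - r 0 + (r 2 - r 1), k 2) \<in> set (nb (k 0))"
    using lift[OF \<open>{c 0, c 1} \<in> E\<close>] lift[OF \<open>{c 1, c 2} \<in> E\<close>] lift[OF \<open>{c 0, c 2} \<in> E\<close>]
    by (simp_all add: r_def k_def)
  moreover have "k 0 \<in> set [0..<m]" using assms(1) by (simp add: k_def)
  ultimately show False using assms(2) unfolding no_balanced_triangle_def by fast
qed

lemma lift_no_4_cycle:
  assumes "0 < m" "no_balanced_quadrilateral m nb"
    and lift: "\<And>u v. {u, v} \<in> E \<Longrightarrow> (int (v div m) - int (u div m), v mod m) \<in> set (nb (u mod m))"
  shows "\<not> has_cycle_of_length V E 4"
proof
  assume "has_cycle_of_length V E 4"
  then obtain c where inj: "inj_on c {..<4::nat}"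
    and edge: "\<forall>i<(4::nat). {c i, c ((i + 1) mod 4)} \<in> E"
    unfolding has_cycle_of_length_def by blast
  have succ: "(0 + 1) mod 4 = (1::nat)" "(1 + 1) mod 4 = (2::nat)" "(2 + 1) mod 4 = (3::nat)"
    "(3 + 1) mod 4 = (0::nat)" by simp_all
  have "{c 0, c 1} \<in> E" "{c 1, c 2} \<in> E" "{c 2, c 3} \<in> E" "{c 3, c 0} \<in> E"
    using edge[rule_format, of 0] edge[rule_format, of 1] edge[rule_format, of 2]
      edge[rule_format, of 3]
    unfolding succ by simp_all
  then have "{c 0, c 3} \<in> E" by (simp add: insert_commute)
  define r where "r i = int (c i div m)" for i
  define k where "k i = c i mod m" for i
  have same_vertex: "c i = c j" if "r i = r j" "k i = k j" for i j
    using that unfolding r_def k_def by (metis div_mult_mod_eq of_nat_eq_iff)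
  have "c 0 \<noteq> c 2" "c 1 \<noteq> c 3" using inj_onD[OF inj, of 0 2] inj_onD[OF inj, of 1 3] by auto
  then have "(r 1 - r 0 + (r 2 - r 1), k 2) \<noteq> (0, k 0)"
    and "(r 1 - r 0 + (r 2 - r 1) + (r 3 - r 2), k 3) \<noteq> (r 1 - r 0, k 1)"
    using same_vertex[of 2 0] same_vertex[of 3 1] by auto
  moreover have "(r 1 - r 0, k 1) \<in> set (nb (k 0))" "(r 2 - r 1, k 2) \<in> set (nb (k 1))"
    and "(r 3 - r 2, k 3) \<in> set (nb (k 2))"
    and "(r 1 - r 0 + (r 2 - r 1) + (r 3 - r 2), k 3) \<in> set (nb (k 0))"
    using lift[OF \<open>{c 0, c 1} \<in> E\<close>] lift[OF \<open>{c 1, c 2} \<in> E\<close>] lift[OF \<open>{c 2, c 3} \<in> E\<close>]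
      lift[OF \<open>{c 0, c 3} \<in> E\<close>]
    by (simp_all add: r_def k_def)
  moreover have "k 0 \<in> set [0..<m]" using assms(1) by (simp add: k_def)
  ultimately show False using assms(2) unfolding no_balanced_quadrilateral_def by fast
qed


section \<open>The template\<close>

text \<open>The points square_point 0, ..., square_point 15 run counterclockwise around the boundary
  of the square [-4, 4]^2.  A pair (x, x') of spoke_edges joins point x of a layer to point x'
  of the next one and is drawn as the segment from square_point x to 3 times square_point x';
  crossing_spokes lists the ordered pairs of spokes whose segments cross.\<close>

definition square_x :: "nat \<Rightarrow> real" where
  "square_x i = [4, 4, 4, 4, 4, 2, 0, -2, -4, -4, -4, -4, -4, -2, 0, 2] ! i"

definition square_y :: "nat \<Rightarrow> real" where
  "square_y i = [-4, -2, 0, 2, 4, 4, 4, 4, 4, 2, 0, -2, -4, -4, -4, -4] ! i"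

definition square_point :: "nat \<Rightarrow> real^2" where
  "square_point i = vector [square_x i, square_y i]"

lemma square_point_component [simp]:
  "square_point i $ 1 = square_x i" "square_point i $ 2 = square_y i"
  by (simp_all add: square_point_def)

definition ring_edges :: "(nat \<times> nat) list" where
  "ring_edges = [(0,1), (1,2), (2,3), (3,4), (4,5), (5,6), (6,7), (7,8), (8,9), (9,10),
    (10,11), (11,12), (12,13), (13,14), (14,15), (15,0)]"

definition spoke_edges :: "(nat \<times> nat) list" where
  "spoke_edges = [(0,3), (0,13), (1,1), (2,5), (2,15), (3,3), (4,7), (4,1), (5,5), (6,9),
    (6,3), (7,7), (8,11), (8,5), (9,9), (10,13), (10,7), (11,11), (12,15), (12,9), (13,13),
    (14,1), (14,11), (15,15)]"

definition crossing_spokes :: "((nat \<times> nat) \<times> (nat \<times> nat)) list" where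
  "crossing_spokes = [((0,3),(1,1)), ((0,3),(2,15)), ((0,3),(4,1)), ((0,13),(12,15)),
    ((0,13),(14,1)), ((0,13),(15,15)), ((1,1),(0,3)), ((1,1),(2,15)), ((2,5),(3,3)),
    ((2,5),(4,1)), ((2,5),(6,3)), ((2,15),(0,3)), ((2,15),(1,1)), ((2,15),(14,1)),
    ((3,3),(2,5)), ((3,3),(4,1)), ((4,7),(5,5)), ((4,7),(6,3)), ((4,7),(8,5)), ((4,1),(0,3)),
    ((4,1),(2,5)), ((4,1),(3,3)), ((5,5),(4,7)), ((5,5),(6,3)), ((6,9),(7,7)), ((6,9),(8,5)),
    ((6,9),(10,7)), ((6,3),(2,5)), ((6,3),(4,7)), ((6,3),(5,5)), ((7,7),(6,9)), ((7,7),(8,5)),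
    ((8,11),(9,9)), ((8,11),(10,7)), ((8,11),(12,9)), ((8,5),(4,7)), ((8,5),(6,9)),
    ((8,5),(7,7)), ((9,9),(8,11)), ((9,9),(10,7)), ((10,13),(11,11)), ((10,13),(12,9)),
    ((10,13),(14,11)), ((10,7),(6,9)), ((10,7),(8,11)), ((10,7),(9,9)), ((11,11),(10,13)),
    ((11,11),(12,9)), ((12,15),(0,13)), ((12,15),(13,13)), ((12,15),(14,11)), ((12,9),(8,11)),
    ((12,9),(10,13)), ((12,9),(11,11)), ((13,13),(12,15)), ((13,13),(14,11)), ((14,1),(0,13)),
    ((14,1),(2,15)), ((14,1),(15,15)), ((14,11),(10,13)), ((14,11),(12,15)), ((14,11),(13,13)),
    ((15,15),(0,13)), ((15,15),(14,1))]"

lemma less_16_cases: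
  "(x::nat) < 16 \<Longrightarrow> x = 0 \<or> x = 1 \<or> x = 2 \<or> x = 3 \<or> x = 4 \<or> x = 5 \<or> x = 6 \<or> x = 7 \<or>
    x = 8 \<or> x = 9 \<or> x = 10 \<or> x = 11 \<or> x = 12 \<or> x = 13 \<or> x = 14 \<or> x = 15"
  by (simp add: less_Suc_eq numeral_eq_Suc)

lemma ring_edge_bounds:
  "(x, x') \<in> set ring_edges \<Longrightarrow> x < 16 \<and> x' < 16 \<and> x \<noteq> x' \<and> (x', x) \<notin> set ring_edges"
  unfolding ring_edges_def
  apply (simp only: set_simps insert_iff empty_iff prod.inject)
  apply (elim disjE conjE)
  apply simp_all
  done

lemma spoke_edge_bounds: "(x, x') \<in> set spoke_edges \<Longrightarrow> x < 16 \<and> x' < 16"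
  unfolding spoke_edges_def
  apply (simp only: set_simps insert_iff empty_iff prod.inject)
  apply (elim disjE conjE)
  apply simp_all
  done

lemma crossing_spokes_are_spokes:
  "(d, d') \<in> set crossing_spokes \<Longrightarrow> d \<in> set spoke_edges \<and> d' \<in> set spoke_edges"
  unfolding crossing_spokes_def
  apply (simp only: set_simps insert_iff empty_iff prod.inject)
  apply (elim disjE conjE)
  apply (simp_all add: spoke_edges_def)
  done

lemma spoke_crosses_at_most_3:
  "d \<in> set spoke_edges \<Longrightarrow> length (filter (\<lambda>c. fst c = d) crossing_spokes) \<le> 3"
  unfolding spoke_edges_def
  apply (simp only: set_simps insert_iff empty_iff)
  apply (elim disjE)
  apply (simp_all add: crossing_spokes_def)
  done

lemma square_point_inj: "x < 16 \<Longrightarrow> z < 16 \<Longrightarrow> square_point x = square_point z \<Longrightarrow> x = z"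
  by (elim less_16_cases[elim_format] disjE)
    (simp_all add: vec_eq_iff forall_2 square_x_def square_y_def)

lemma infnorm_square_point: "x < 16 \<Longrightarrow> infnorm (square_point x) = 4"
  by (elim less_16_cases[elim_format] disjE) (simp_all add: infnorm_2 square_x_def square_y_def)

lemma ring_segment_infnorm:
  assumes "(x, x') \<in> set ring_edges" "p \<in> open_segment (square_point x) (square_point x')"
  shows "infnorm p = 4"
  using assms unfolding infnorm_2 in_open_segment_2 ring_edges_def
  apply (simp only: set_simps insert_iff empty_iff prod.inject)
  apply (elim disjE conjE exE)
  apply (simp_all add: square_x_def square_y_def max_def abs_if)
  done

lemma spoke_segment_infnorm:
  assumes "(x, x') \<in> set spoke_edges" "p \<in> open_segment (square_point x) (3 *\<^sub>R square_point x')"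
  shows "4 < infnorm p \<and> infnorm p < 12"
  using assms unfolding infnorm_2 in_open_segment_2 spoke_edges_def
  apply (simp only: set_simps insert_iff empty_iff prod.inject)
  apply (elim disjE conjE exE)
  apply (simp_all add: square_x_def square_y_def max_def abs_if)
  done

lemma ring_segments_disjoint:
  assumes "(x, x') \<in> set ring_edges" "(z, z') \<in> set ring_edges" "(x, x') \<noteq> (z, z')"
    and "p \<in> open_segment (square_point x) (square_point x')"
    and "p \<in> open_segment (square_point z) (square_point z')"
  shows False
  using assms unfolding in_open_segment_2 ring_edges_def
  apply (simp only: set_simps insert_iff empty_iff prod.inject)
  apply (elim disjE conjE exE)
  apply (simp_all add: square_x_def square_y_def)
  done

lemma square_point_notin_ring_segment:
  assumes "(x, x') \<in> set ring_edges" "z < 16"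
  shows "square_point z \<notin> open_segment (square_point x) (square_point x')"
proof
  assume "square_point z \<in> open_segment (square_point x) (square_point x')"
  with less_16_cases[OF assms(2)] assms(1) show False
    unfolding in_open_segment_2 ring_edges_def
    apply (simp only: set_simps insert_iff empty_iff prod.inject)
    apply (elim disjE conjE exE)
    apply (simp_all add: square_x_def square_y_def)
    done
qed

lemma spoke_segments_meet_only_if_crossing:
  assumes "(x, x') \<in> set spoke_edges" "(z, z') \<in> set spoke_edges" "(x, x') \<noteq> (z, z')"
    and "p \<in> open_segment (square_point x) (3 *\<^sub>R square_point x')"
    and "p \<in> open_segment (square_point z) (3 *\<^sub>R square_point z')"
  shows "((x, x'), (z, z')) \<in> set crossing_spokes"
proof (rule ccontr)
  assume "((x, x'), (z, z')) \<notin> set crossing_spokes"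
  with assms show False
    unfolding in_open_segment_2 spoke_edges_def crossing_spokes_def
    apply (simp only: set_simps insert_iff empty_iff prod.inject)
    apply (elim disjE conjE exE)
    apply (simp_all add: square_x_def square_y_def)
    done
qed

lemma crossing_spoke_segments_meet_at_most_once:
  assumes "((x, x'), (z, z')) \<in> set crossing_spokes"
    and "p \<in> open_segment (square_point x) (3 *\<^sub>R square_point x')"
    and "p \<in> open_segment (square_point z) (3 *\<^sub>R square_point z')"
    and "p' \<in> open_segment (square_point x) (3 *\<^sub>R square_point x')"
    and "p' \<in> open_segment (square_point z) (3 *\<^sub>R square_point z')"
  shows "p = p'"
  using assms(1) unfolding crossing_spokes_def
  apply (intro open_segments_meet_at_most_once[OF _ assms(2-5)])
  apply (simp only: set_simps insert_iff empty_iff prod.inject)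
  apply (elim disjE conjE)
  apply (simp_all add: square_x_def square_y_def)
  done

definition template_neighbours :: "nat \<Rightarrow> (int \<times> nat) list" where
  "template_neighbours x =
     [(0, x'). (x0, x') \<leftarrow> ring_edges, x0 = x] @ [(0, x0). (x0, x') \<leftarrow> ring_edges, x' = x] @
     [(1, x'). (x0, x') \<leftarrow> spoke_edges, x0 = x] @ [(-1, x0). (x0, x') \<leftarrow> spoke_edges, x' = x]"

lemma template_no_balanced_triangle: "no_balanced_triangle 16 template_neighbours"
  unfolding no_balanced_triangle_def by code_simp

lemma template_no_balanced_quadrilateral: "no_balanced_quadrilateral 16 template_neighbours"
  unfolding no_balanced_quadrilateral_def by code_simp


section \<open>The layered graph\<close>

definition ring_edge :: "nat \<Rightarrow> nat \<times> nat \<Rightarrow> nat set" where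
  "ring_edge y d = {16 * y + fst d, 16 * y + snd d}"

definition spoke :: "nat \<Rightarrow> nat \<times> nat \<Rightarrow> nat set" where
  "spoke y d = {16 * y + fst d, 16 * (y + 1) + snd d}"

definition layered_edges :: "nat \<Rightarrow> nat set set" where
  "layered_edges R = (\<lambda>(y, d). ring_edge y d) ` ({..<R} \<times> set ring_edges) \<union>
                     (\<lambda>(y, d). spoke y d) ` ({..<R - 1} \<times> set spoke_edges)"

lemma layered_edgeE:
  assumes "e \<in> layered_edges R"
  obtains (ring) y x x' where "y < R" "(x, x') \<in> set ring_edges" "e = ring_edge y (x, x')"
    | (spoke) y x x' where "y + 1 < R" "(x, x') \<in> set spoke_edges" "e = spoke y (x, x')"
proof -
  consider "e \<in> (\<lambda>(y, d). ring_edge y d) ` ({..<R} \<times> set ring_edges)"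
    | "e \<in> (\<lambda>(y, d). spoke y d) ` ({..<R - 1} \<times> set spoke_edges)"
    using assms unfolding layered_edges_def by blast
  then show thesis
  proof cases
    case 1
    then obtain y x x' where "y < R" "(x, x') \<in> set ring_edges" "e = ring_edge y (x, x')" by auto
    then show thesis by (rule ring)
  next
    case 2
    then obtain y x x' where "y < R - 1" "(x, x') \<in> set spoke_edges" "e = spoke y (x, x')" by auto
    then show thesis by (intro spoke) auto
  qed
qed

lemma layered_edge_endpoints:
  assumes "e \<in> layered_edges R"
  obtains u v where "e = {u, v}" "u \<noteq> v" "u < 16 * R" "v < 16 * R"
  using assms
proof (cases rule: layered_edgeE)
  case (ring y x x')
  with ring_edge_bounds[OF ring(2)] show ?thesis
    by (intro that[of "16 * y + x" "16 * y + x'"]) (auto simp: ring_edge_def)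
next
  case (spoke y x x')
  with spoke_edge_bounds[OF spoke(2)] show ?thesis
    by (intro that[of "16 * y + x" "16 * (y + 1) + x'"]) (auto simp: spoke_def)
qed

lemma simple_graph_layered_edges: "16 * R \<le> n \<Longrightarrow> simple_graph {..<n} (layered_edges R)"
  unfolding simple_graph_def by (auto elim!: layered_edge_endpoints)

lemma ring_edge_in_layered_edges: "y < R \<Longrightarrow> d \<in> set ring_edges \<Longrightarrow> ring_edge y d \<in> layered_edges R"
  unfolding layered_edges_def by force

lemma spoke_in_layered_edges: "y + 1 < R \<Longrightarrow> d \<in> set spoke_edges \<Longrightarrow> spoke y d \<in> layered_edges R"
  unfolding layered_edges_def by force

lemma template_neighbours_ring_edge:
  "(x, x') \<in> set ring_edges \<Longrightarrow>
    (0, x') \<in> set (template_neighbours x) \<and> (0, x) \<in> set (template_neighbours x')"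
  unfolding template_neighbours_def by force

lemma template_neighbours_spoke:
  "(x, x') \<in> set spoke_edges \<Longrightarrow>
    (1, x') \<in> set (template_neighbours x) \<and> (-1, x) \<in> set (template_neighbours x')"
  unfolding template_neighbours_def by force

lemma lift_edge_in_template_neighbours:
  assumes "x < 16" "x' < 16" "{u, v} = {16 * y + x, 16 * y' + x'}"
    and "(int y' - int y, x') \<in> set (template_neighbours x)"
    and "(int y - int y', x) \<in> set (template_neighbours x')"
  shows "(int (v div 16) - int (u div 16), v mod 16) \<in> set (template_neighbours (u mod 16))"
proof -
  have "(16 * k + i) div 16 = k" "(16 * k + i) mod 16 = i" if "i < 16" for i k :: nat
    using that by simp_all
  with assms show ?thesis by (auto simp: doubleton_eq_iff)
qed

lemma layered_edges_lift_template:
  assumes "{u, v} \<in> layered_edges R"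
  shows "(int (v div 16) - int (u div 16), v mod 16) \<in> set (template_neighbours (u mod 16))"
  using assms
proof (cases rule: layered_edgeE)
  case (ring y x x')
  then show ?thesis
    using ring_edge_bounds[OF ring(2)] template_neighbours_ring_edge[OF ring(2)]
    by (intro lift_edge_in_template_neighbours[of x x' u v y y]) (auto simp: ring_edge_def)
next
  case (spoke y x x')
  then show ?thesis
    using spoke_edge_bounds[OF spoke(2)] template_neighbours_spoke[OF spoke(2)]
    by (intro lift_edge_in_template_neighbours[of x x' u v y "y + 1"]) (auto simp: spoke_def)
qed

lemma layered_edges_5_cycle:
  assumes "2 \<le> R" "32 \<le> n"
  shows "has_cycle_of_length {..<n} (layered_edges R) 5"
proof -
  have "spoke 0 (0, 3) \<in> layered_edges R" "spoke 0 (3, 3) \<in> layered_edges R"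
    using assms(1) by (auto intro!: spoke_in_layered_edges simp: spoke_edges_def)
  moreover have "ring_edge 0 (2, 3) \<in> layered_edges R" "ring_edge 0 (1, 2) \<in> layered_edges R"
    and "ring_edge 0 (0, 1) \<in> layered_edges R"
    using assms(1) by (auto intro!: ring_edge_in_layered_edges simp: ring_edges_def)
  moreover have "spoke 0 (0, 3) = {0, 19}" "spoke 0 (3, 3) = {19, 3}" "ring_edge 0 (2, 3) = {3, 2}"
    and "ring_edge 0 (1, 2) = {2, 1}" "ring_edge 0 (0, 1) = {1, 0}"
    by (auto simp: spoke_def ring_edge_def)
  ultimately have edges: "{0, 19} \<in> layered_edges R" "{19, 3} \<in> layered_edges R"
    "{3, 2} \<in> layered_edges R" "{2, 1} \<in> layered_edges R" "{1, 0} \<in> layered_edges R"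
    by simp_all
  have "{[0, 19, 3, 2, 1] ! i, [0, 19, 3, 2, 1] ! ((i + 1) mod 5)} \<in> layered_edges R" if "i < 5" for i
  proof -
    have "i = 0 \<or> i = 1 \<or> i = 2 \<or> i = 3 \<or> i = 4" using that by (simp add: less_Suc_eq numeral_eq_Suc)
    with edges show ?thesis by (elim disjE) simp_all
  qed
  then show ?thesis
    using assms(2) by (intro has_cycle_of_length_if_list[of "[0, 19, 3, 2, 1]"]) auto
qed

lemma girth_layered_edges:
  assumes "2 \<le> R" "32 \<le> n"
  shows "girth {..<n} (layered_edges R) = 5"
proof (rule girth_eqI)
  show "has_cycle_of_length {..<n} (layered_edges R) 5"
    using assms by (rule layered_edges_5_cycle)
  have "\<not> has_cycle_of_length {..<n} (layered_edges R) 3"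
    and "\<not> has_cycle_of_length {..<n} (layered_edges R) 4"
    using lift_no_3_cycle[OF _ template_no_balanced_triangle]
      lift_no_4_cycle[OF _ template_no_balanced_quadrilateral] layered_edges_lift_template
    by auto
  moreover have "3 \<le> k" if "has_cycle_of_length {..<n} (layered_edges R) k" for k
    using that by (simp add: has_cycle_of_length_def)
  ultimately show "\<not> has_cycle_of_length {..<n} (layered_edges R) k" if "k < 5" for k
    using that by (cases "k = 3"; cases "k = 4") fastforce+
qed

lemma layer_index_eq_iff:
  assumes "x < 16" "x' < 16"
  shows "16 * y + x = 16 * y' + x' \<longleftrightarrow> y = y' \<and> x = (x'::nat)"
proof
  assume "16 * y + x = 16 * y' + x'"
  then have "(16 * y + x) div 16 = (16 * y' + x') div 16" "(16 * y + x) mod 16 = (16 * y' + x') mod 16"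
    by simp_all
  with assms show "y = y' \<and> x = x'" by simp
qed simp

lemma ring_edge_eq_iff:
  assumes "(x, x') \<in> set ring_edges" "(z, z') \<in> set ring_edges"
  shows "ring_edge y (x, x') = ring_edge y' (z, z') \<longleftrightarrow> y = y' \<and> (x, x') = (z, z')"
  using ring_edge_bounds[OF assms(1)] ring_edge_bounds[OF assms(2)] assms
  by (auto simp: ring_edge_def doubleton_eq_iff layer_index_eq_iff)

lemma spoke_eq_iff:
  assumes "(x, x') \<in> set spoke_edges" "(z, z') \<in> set spoke_edges"
  shows "spoke y (x, x') = spoke y' (z, z') \<longleftrightarrow> y = y' \<and> (x, x') = (z, z')"
  using spoke_edge_bounds[OF assms(1)] spoke_edge_bounds[OF assms(2)]
  by (auto simp: spoke_def doubleton_eq_iff layer_index_eq_iff)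

lemma ring_edge_neq_spoke:
  assumes "(x, x') \<in> set ring_edges" "(z, z') \<in> set spoke_edges"
  shows "ring_edge y (x, x') \<noteq> spoke y' (z, z')"
  using ring_edge_bounds[OF assms(1)] spoke_edge_bounds[OF assms(2)]
  by (auto simp: ring_edge_def spoke_def doubleton_eq_iff layer_index_eq_iff)

lemma card_layered_edges: "card (layered_edges R) = 16 * R + 24 * (R - 1)"
proof -
  have "inj_on (\<lambda>(y, d). ring_edge y d) ({..<R} \<times> set ring_edges)"
    using ring_edge_eq_iff by (auto simp: inj_on_def)
  moreover have "inj_on (\<lambda>(y, d). spoke y d) ({..<R - 1} \<times> set spoke_edges)"
    using spoke_eq_iff by (auto simp: inj_on_def)
  moreover have "(\<lambda>(y, d). ring_edge y d) ` ({..<R} \<times> set ring_edges) \<inter>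
      (\<lambda>(y, d). spoke y d) ` ({..<R - 1} \<times> set spoke_edges) = {}"
    using ring_edge_neq_spoke by fastforce
  moreover have "card (set ring_edges) = 16" "card (set spoke_edges) = 24"
    by (simp_all add: ring_edges_def spoke_edges_def)
  ultimately show ?thesis
    by (simp add: layered_edges_def card_Un_disjoint card_image card_cartesian_product)
qed


section \<open>The 3-planar drawing\<close>

text \<open>The vertices beyond the 16 R layered ones are isolated; they are placed inside the
  innermost square, away from all edges.\<close>

definition vertex_point :: "nat \<Rightarrow> nat \<Rightarrow> real^2" where
  "vertex_point R v =
     (if v < 16 * R then 3 ^ (v div 16) *\<^sub>R square_point (v mod 16)
      else vector [0, 1 / (real v + 2)])"

definition edge_curve :: "nat \<Rightarrow> nat set \<Rightarrow> real \<Rightarrow> real^2" where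
  "edge_curve R e = linepath (vertex_point R (Min e)) (vertex_point R (Max e))"

lemma vertex_point_layered: "y < R \<Longrightarrow> x < 16 \<Longrightarrow> vertex_point R (16 * y + x) = 3 ^ y *\<^sub>R square_point x"
  by (simp add: vertex_point_def)

lemma infnorm_vertex_point:
  "infnorm (vertex_point R v) = (if v < 16 * R then 4 * 3 ^ (v div 16) else 1 / (real v + 2))"
proof (cases "v < 16 * R")
  case True
  then show ?thesis by (simp add: vertex_point_def infnorm_mul infnorm_square_point)
next
  case False
  then show ?thesis by (simp add: vertex_point_def infnorm_2)
qed

lemma infnorm_vertex_point_layered: "v < 16 * R \<Longrightarrow> 4 \<le> infnorm (vertex_point R v)"
  by (simp add: infnorm_vertex_point)

lemma infnorm_vertex_point_isolated: "\<not> v < 16 * R \<Longrightarrow> infnorm (vertex_point R v) < 4"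
  by (simp add: infnorm_vertex_point field_simps)

lemma vertex_point_inj: "inj (vertex_point R)"
proof (rule injI)
  fix u v assume eq: "vertex_point R u = vertex_point R v"
  consider "u < 16 * R" "v < 16 * R" | "\<not> u < 16 * R" "\<not> v < 16 * R"
    using eq infnorm_vertex_point_layered infnorm_vertex_point_isolated by (metis not_less)
  then show "u = v"
  proof cases
    case 1
    with arg_cong[OF eq, of infnorm] have layer: "u div 16 = v div 16"
      by (simp add: infnorm_vertex_point)
    with eq 1 have "square_point (u mod 16) = square_point (v mod 16)"
      by (simp add: vertex_point_def)
    then have "u mod 16 = v mod 16" by (simp add: square_point_inj)
    with layer show ?thesis by (metis div_mult_mod_eq)
  next
    case 2
    with arg_cong[OF eq, of "\<lambda>p. p $ 2"] show ?thesis by (simp add: vertex_point_def)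
  qed
qed

lemma curve_interior_edge_curve:
  assumes "u \<noteq> v"
  shows "curve_interior (edge_curve R {u, v}) = open_segment (vertex_point R u) (vertex_point R v)"
  using assms inj_eq[OF vertex_point_inj, of R u v]
  by (cases "u < v") (auto simp: edge_curve_def curve_interior_linepath open_segment_commute)

lemma ring_edge_interior:
  assumes "y < R" "(x, x') \<in> set ring_edges"
  shows "curve_interior (edge_curve R (ring_edge y (x, x'))) =
    (\<lambda>p. 3 ^ y *\<^sub>R p) ` open_segment (square_point x) (square_point x')"
  using ring_edge_bounds[OF assms(2)] assms(1)
  by (simp add: ring_edge_def curve_interior_edge_curve vertex_point_layered open_segment_scaleR)

lemma spoke_interior:
  assumes "y + 1 < R" "(x, x') \<in> set spoke_edges"
  shows "curve_interior (edge_curve R (spoke y (x, x'))) =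
    (\<lambda>p. 3 ^ y *\<^sub>R p) ` open_segment (square_point x) (3 *\<^sub>R square_point x')"
proof -
  have "x < 16" "x' < 16" using spoke_edge_bounds[OF assms(2)] by auto
  have "curve_interior (edge_curve R (spoke y (x, x'))) =
      open_segment (vertex_point R (16 * y + x)) (vertex_point R (16 * (y + 1) + x'))"
    unfolding spoke_def fst_conv snd_conv using \<open>x < 16\<close> by (intro curve_interior_edge_curve) simp
  also have "vertex_point R (16 * y + x) = 3 ^ y *\<^sub>R square_point x"
    using assms(1) \<open>x < 16\<close> by (simp add: vertex_point_layered)
  also have "vertex_point R (16 * (y + 1) + x') = 3 ^ (y + 1) *\<^sub>R square_point x'"
    using assms(1) \<open>x' < 16\<close> by (intro vertex_point_layered) auto
  also have "\<dots> = 3 ^ y *\<^sub>R (3 *\<^sub>R square_point x')" by (simp add: mult.commute)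
  also have "open_segment (3 ^ y *\<^sub>R square_point x) (3 ^ y *\<^sub>R (3 *\<^sub>R square_point x')) =
      (\<lambda>p. 3 ^ y *\<^sub>R p) ` open_segment (square_point x) (3 *\<^sub>R square_point x')"
    by (rule open_segment_scaleR) simp
  finally show ?thesis .
qed

lemma ring_edge_interior_infnorm:
  assumes "y < R" "(x, x') \<in> set ring_edges" "p \<in> curve_interior (edge_curve R (ring_edge y (x, x')))"
  shows "infnorm p = 4 * 3 ^ y"
  using assms ring_segment_infnorm[OF assms(2)] by (auto simp: ring_edge_interior infnorm_mul)

lemma spoke_interior_infnorm:
  assumes "y + 1 < R" "(x, x') \<in> set spoke_edges" "p \<in> curve_interior (edge_curve R (spoke y (x, x')))"
  shows "4 * 3 ^ y < infnorm p \<and> infnorm p < 12 * 3 ^ y"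
  using assms spoke_segment_infnorm[OF assms(2)] by (auto simp: spoke_interior infnorm_mul)

lemma ring_edge_uncrossed:
  assumes "y < R" "(x, x') \<in> set ring_edges" "f \<in> layered_edges R" "f \<noteq> ring_edge y (x, x')"
    and "p \<in> curve_interior (edge_curve R (ring_edge y (x, x')))" "p \<in> curve_interior (edge_curve R f)"
  shows False
proof -
  obtain a where a: "a \<in> open_segment (square_point x) (square_point x')" "p = 3 ^ y *\<^sub>R a"
    using assms(5) by (auto simp: ring_edge_interior[OF assms(1,2)])
  have norm_p: "infnorm p = 4 * 3 ^ y" using ring_edge_interior_infnorm[OF assms(1,2,5)] .
  from assms(3) show False
  proof (cases rule: layered_edgeE)
    case (ring y' z z')
    obtain b where b: "b \<in> open_segment (square_point z) (square_point z')" "p = 3 ^ y' *\<^sub>R b"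
      using assms(6) by (auto simp: ring(3) ring_edge_interior[OF ring(1,2)])
    have "y' = y" using ring_edge_interior_infnorm[OF ring(1,2)] assms(6) ring(3) norm_p by simp
    with a b have "a = b" by simp
    moreover have "(x, x') \<noteq> (z, z')" using assms(4) ring(3) \<open>y' = y\<close> by auto
    ultimately show False using ring_segments_disjoint[OF assms(2) ring(2)] a(1) b(1) by blast
  next
    case (spoke y' z z')
    then have band: "4 * 3 ^ y' < infnorm p" "infnorm p < 12 * 3 ^ y'"
      using spoke_interior_infnorm[OF spoke(1,2)] assms(6) by auto
    with norm_p have "y = y'" using power_band_unique[of 3 4 y "infnorm p" y'] by simp
    with band norm_p show False by simp
  qed
qed

lemma spoke_crossing:
  assumes "y + 1 < R" "(x, x') \<in> set spoke_edges" "f \<in> layered_edges R" "f \<noteq> spoke y (x, x')"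
    and "p \<in> curve_interior (edge_curve R (spoke y (x, x')))" "p \<in> curve_interior (edge_curve R f)"
  shows "\<exists>d. ((x, x'), d) \<in> set crossing_spokes \<and> f = spoke y d"
proof -
  obtain a where a: "a \<in> open_segment (square_point x) (3 *\<^sub>R square_point x')" "p = 3 ^ y *\<^sub>R a"
    using assms(5) by (auto simp: spoke_interior[OF assms(1,2)])
  have band: "4 * 3 ^ y < infnorm p" "infnorm p < 12 * 3 ^ y"
    using spoke_interior_infnorm[OF assms(1,2,5)] by auto
  from assms(3) show ?thesis
  proof (cases rule: layered_edgeE)
    case (ring y' z z')
    then have "infnorm p = 4 * 3 ^ y'" using ring_edge_interior_infnorm[OF ring(1,2)] assms(6) by simp
    with band have "y = y'" using power_band_unique[of 3 4 y "infnorm p" y'] by simp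
    with band \<open>infnorm p = 4 * 3 ^ y'\<close> show ?thesis by simp
  next
    case (spoke y' z z')
    obtain b where b: "b \<in> open_segment (square_point z) (3 *\<^sub>R square_point z')" "p = 3 ^ y' *\<^sub>R b"
      using assms(6) by (auto simp: spoke(3) spoke_interior[OF spoke(1,2)])
    have "4 * 3 ^ y' < infnorm p" "infnorm p < 12 * 3 ^ y'"
      using spoke_interior_infnorm[OF spoke(1,2)] assms(6) spoke(3) by auto
    with band have "y' = y" using power_band_unique[of 3 4 y "infnorm p" y'] by simp
    with a b have "a = b" by simp
    moreover have "(x, x') \<noteq> (z, z')" using assms(4) spoke(3) \<open>y' = y\<close> by auto
    ultimately have "((x, x'), (z, z')) \<in> set crossing_spokes"
      using spoke_segments_meet_only_if_crossing[OF assms(2) spoke(2)] a(1) b(1) by blast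
    with spoke(3) \<open>y' = y\<close> show ?thesis by blast
  qed
qed

lemma crossing_spokes_meet_once:
  assumes "y + 1 < R" "((x, x'), (z, z')) \<in> set crossing_spokes"
    and "p \<in> curve_interior (edge_curve R (spoke y (x, x')))"
      "p \<in> curve_interior (edge_curve R (spoke y (z, z')))"
    and "p' \<in> curve_interior (edge_curve R (spoke y (x, x')))"
      "p' \<in> curve_interior (edge_curve R (spoke y (z, z')))"
  shows "p = p'"
proof -
  have spokes: "(x, x') \<in> set spoke_edges" "(z, z') \<in> set spoke_edges"
    using crossing_spokes_are_spokes[OF assms(2)] by auto
  note interiors = spoke_interior[OF assms(1) spokes(1)] spoke_interior[OF assms(1) spokes(2)]
  obtain a b where a: "a \<in> open_segment (square_point x) (3 *\<^sub>R square_point x')" "p = 3 ^ y *\<^sub>R a"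
    and b: "b \<in> open_segment (square_point z) (3 *\<^sub>R square_point z')" "p = 3 ^ y *\<^sub>R b"
    using assms(3,4) by (auto simp: interiors)
  obtain a' b' where a': "a' \<in> open_segment (square_point x) (3 *\<^sub>R square_point x')" "p' = 3 ^ y *\<^sub>R a'"
    and b': "b' \<in> open_segment (square_point z) (3 *\<^sub>R square_point z')" "p' = 3 ^ y *\<^sub>R b'"
    using assms(5,6) by (auto simp: interiors)
  have "a = b" "a' = b'" using a(2) b(2) a'(2) b'(2) by simp_all
  with a(1) b(1) a'(1) b'(1) have "a = a'"
    using crossing_spoke_segments_meet_at_most_once[OF assms(2)] by blast
  with a(2) a'(2) show ?thesis by simp
qed

lemma edge_interior_avoids_vertices:
  assumes "e \<in> layered_edges R" "p \<in> curve_interior (edge_curve R e)"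
  shows "p \<noteq> vertex_point R v"
proof
  assume p: "p = vertex_point R v"
  from assms(1) show False
  proof (cases rule: layered_edgeE)
    case (ring y x x')
    obtain a where a: "a \<in> open_segment (square_point x) (square_point x')" "p = 3 ^ y *\<^sub>R a"
      using assms(2) by (auto simp: ring(3) ring_edge_interior[OF ring(1,2)])
    have norm_p: "infnorm p = 4 * 3 ^ y"
      using ring_edge_interior_infnorm[OF ring(1,2)] assms(2) ring(3) by simp
    show False
    proof (cases "v < 16 * R")
      case True
      with p norm_p have "v div 16 = y" by (simp add: infnorm_vertex_point)
      with True p a(2) have "a = square_point (v mod 16)" by (simp add: vertex_point_def)
      with a(1) show False using square_point_notin_ring_segment[OF ring(2)] by simp
    next
      case False
      with p have "infnorm p < 4" by (simp add: infnorm_vertex_point_isolated)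
      moreover have "(1::real) \<le> 3 ^ y" by simp
      ultimately show False using norm_p by linarith
    qed
  next
    case (spoke y x x')
    have band: "4 * 3 ^ y < infnorm p" "infnorm p < 12 * 3 ^ y"
      using spoke_interior_infnorm[OF spoke(1,2)] assms(2) spoke(3) by auto
    show False
    proof (cases "v < 16 * R")
      case True
      with p have "infnorm p = 4 * 3 ^ (v div 16)" by (simp add: infnorm_vertex_point)
      with band have "y = v div 16" using power_band_unique[of 3 4 y "infnorm p" "v div 16"] by simp
      with band \<open>infnorm p = 4 * 3 ^ (v div 16)\<close> show False by simp
    next
      case False
      with p have "infnorm p < 4" by (simp add: infnorm_vertex_point_isolated)
      moreover have "(1::real) \<le> 3 ^ y" by simp
      ultimately show False using band by linarith
    qed
  qed
qed

lemma layered_edge_crossings: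
  assumes "e \<in> layered_edges R"
  shows "finite (crossings (layered_edges R) (edge_curve R) e) \<and>
    card (crossings (layered_edges R) (edge_curve R) e) \<le> 3"
  using assms
proof (cases rule: layered_edgeE)
  case (ring y x x')
  then have "crossings (layered_edges R) (edge_curve R) e = {}"
    using ring_edge_uncrossed[OF ring(1,2)] by (auto simp: crossings_def)
  then show ?thesis by simp
next
  case (spoke y x x')
  define F where "F = (\<lambda>c. spoke y (snd c)) ` set (filter (\<lambda>c. fst c = (x, x')) crossing_spokes)"
  have "card F \<le> card (set (filter (\<lambda>c. fst c = (x, x')) crossing_spokes))"
    unfolding F_def by (rule card_image_le) simp
  also have "\<dots> \<le> length (filter (\<lambda>c. fst c = (x, x')) crossing_spokes)"
    by (rule card_length)
  also have "\<dots> \<le> 3" using spoke_crosses_at_most_3[OF spoke(2)] .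
  finally have "card F \<le> 3" .
  have "finite (crossings (layered_edges R) (edge_curve R) e) \<and>
    card (crossings (layered_edges R) (edge_curve R) e) \<le> card F"
  proof (rule card_le_if_functional)
    fix f p assume "(f, p) \<in> crossings (layered_edges R) (edge_curve R) e"
    then obtain d where "((x, x'), d) \<in> set crossing_spokes" "f = spoke y d"
      using spoke_crossing[OF spoke(1,2)] unfolding crossings_def spoke(3) by blast
    then show "f \<in> F" unfolding F_def by force
  next
    fix f p p' assume p: "(f, p) \<in> crossings (layered_edges R) (edge_curve R) e"
      and p': "(f, p') \<in> crossings (layered_edges R) (edge_curve R) e"
    then obtain d where d: "((x, x'), d) \<in> set crossing_spokes" "f = spoke y d"
      using spoke_crossing[OF spoke(1,2)] unfolding crossings_def spoke(3) by blast
    obtain z z' where "d = (z, z')" by fastforce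
    with d p p' show "p = p'"
      using crossing_spokes_meet_once[OF spoke(1)] unfolding crossings_def spoke(3) by blast
  qed (simp add: F_def)
  with \<open>card F \<le> 3\<close> show ?thesis by linarith
qed

lemma layered_edges_drawing: "k_planar_drawing 3 V (layered_edges R) (vertex_point R) (edge_curve R)"
  unfolding k_planar_drawing_def crossings_def[symmetric]
proof (intro conjI ballI)
  show "inj_on (vertex_point R) V" using vertex_point_inj by (rule inj_on_subset) simp
next
  fix e assume e: "e \<in> layered_edges R"
  then obtain u v where uv: "e = {u, v}" "u \<noteq> v" by (rule layered_edge_endpoints)
  then show "arc (edge_curve R e)"
    using inj_eq[OF vertex_point_inj] by (auto simp: edge_curve_def min_def max_def)
  show "\<exists>u v. e = {u, v} \<and> pathstart (edge_curve R e) = vertex_point R u \<and>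
      pathfinish (edge_curve R e) = vertex_point R v"
    using uv by (intro exI[of _ "min u v"] exI[of _ "max u v"])
      (auto simp: edge_curve_def min_def max_def)
  show "curve_interior (edge_curve R e) \<inter> vertex_point R ` V = {}"
    using edge_interior_avoids_vertices[OF e] by blast
  show "finite (crossings (layered_edges R) (edge_curve R) e)"
    and "card (crossings (layered_edges R) (edge_curve R) e) \<le> 3"
    using layered_edge_crossings[OF e] by auto
qed

lemma k_planar_layered_edges: "k_planar 3 V (layered_edges R)"
  unfolding k_planar_def using layered_edges_drawing by blast

theorem theorem22:
  shows "\<exists>C::real. \<exists>N::nat. \<forall>n\<ge>N. \<exists>(V :: nat set) (E :: nat set set).
           simple_graph V E \<and> card V = n \<and> k_planar 3 V E \<and> girth V E = 5 \<and>
           real (card E) \<ge> 2.5 * real n - C"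
proof -
  have "\<exists>(V :: nat set) E. simple_graph V E \<and> card V = n \<and> k_planar 3 V E \<and> girth V E = 5 \<and>
      real (card E) \<ge> 2.5 * real n - 64" if "32 \<le> n" for n
  proof -
    define R where "R = n div 16"
    have "2 \<le> R" "16 * R \<le> n" "n < 16 * R + 16" using that by (simp_all add: R_def)
    then have "real (card (layered_edges R)) \<ge> 2.5 * real n - 64"
      by (simp add: card_layered_edges of_nat_diff)
    with simple_graph_layered_edges[OF \<open>16 * R \<le> n\<close>] girth_layered_edges[OF \<open>2 \<le> R\<close> that]
      k_planar_layered_edges[of "{..<n}" R]
    show ?thesis by (intro exI[where x = "{..<n}"] exI[where x = "layered_edges R"]) simp
  qed
  then show ?thesis by blast
qed

end
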